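(* For every $R>0$ and every integer $\ell\ge1$, $\widehat W_R(\ell)\le\widehat W_R(1)$, where $\widehat W_R(\ell)=\frac{2}{\pi\ell^3}(\ell R-\sin(\ell R))$.
   Context: For $R\in[0,\pi]$, $\widehat W_R(\ell)$ is the $\ell$-th Fourier coefficient $\int_{\mathbb T}W_R(\theta)e^{-2\pi i\ell\theta}d\theta$ of the Hegselmann--Krause interaction $W_R(\theta)=(R-2\pi|\theta|)_+^2$ on $\mathbb T=[-\frac12,\frac12)$; the claim concerns the explicit formula given. *)

theory Defs
  imports Complex_Main
begin

text \<open>Explicit formula for the Fourier coefficient of the Hegselmann--Krause interaction.\<close>
definition W_hat :: "real \<Rightarrow> nat \<Rightarrow> real" where
  "W_hat R l = 2 / (pi * real l ^ 3) * (real l * R - sin (real l * R))"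

end

theory Submission
  imports Defs
begin

text \<open>With \<open>g x = x - sin x\<close> we have \<open>W_hat R l = 2 / pi * g (l R) / l\<^sup>3\<close>, so it suffices
  to show \<open>g (l x) \<le> l\<^sup>3 g x\<close> for \<open>x \<ge> 0\<close>. Both sides vanish at \<open>x = 0\<close>, and the derivative
  of the difference is \<open>l (l\<^sup>2 (1 - cos x) - (1 - cos (l x)))\<close>, which is nonnegative because
  \<open>1 - cos y = 2 sin\<^sup>2 (y/2)\<close> and \<open>\<bar>sin (l y)\<bar> \<le> l \<bar>sin y\<bar>\<close>.\<close>

lemma abs_sin_nat_mult_le: "\<bar>sin (real n * y)\<bar> \<le> real n * \<bar>sin y\<bar>"
proof (induction n)
  case 0
  then show ?case by simp
next
  case (Suc n)
  have "sin (real (Suc n) * y) = sin (real n * y) * cos y + cos (real n * y) * sin y"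
    by (simp add: distrib_right sin_add)
  also have "\<bar>\<dots>\<bar> \<le> \<bar>sin (real n * y)\<bar> * \<bar>cos y\<bar> + \<bar>cos (real n * y)\<bar> * \<bar>sin y\<bar>"
    by (metis abs_mult abs_triangle_ineq)
  also have "\<dots> \<le> \<bar>sin (real n * y)\<bar> + \<bar>sin y\<bar>"
    by (intro add_mono mult_left_le mult_left_le_one_le) auto
  finally show ?case
    using Suc.IH by (simp add: distrib_right)
qed

lemma one_minus_cos_nat_mult_le: "1 - cos (real n * x) \<le> (real n)\<^sup>2 * (1 - cos x)"
proof -
  have half_angle: "1 - cos y = 2 * (sin (y / 2))\<^sup>2" for y :: real
    using cos_double_sin[of "y / 2"] by simp
  have "(sin (real n * (x / 2)))\<^sup>2 \<le> (real n * \<bar>sin (x / 2)\<bar>)\<^sup>2"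
    using abs_sin_nat_mult_le by (metis abs_ge_zero power2_abs power_mono)
  then show ?thesis
    using half_angle[of "real n * x"] half_angle[of x] by (simp add: power_mult_distrib)
qed

lemma nat_mult_minus_sin_le:
  assumes "x \<ge> 0"
  shows "real n * x - sin (real n * x) \<le> (real n)^3 * (x - sin x)"
proof -
  define F where "F y = (real n)^3 * (y - sin y) - (real n * y - sin (real n * y))" for y
  have F_deriv: "(F has_real_derivative
      real n * ((real n)\<^sup>2 * (1 - cos y) - (1 - cos (real n * y)))) (at y)" for y
    unfolding F_def by (auto intro!: derivative_eq_intros simp: algebra_simps power3_eq_cube power2_eq_square)
  have "0 \<le> real n * ((real n)\<^sup>2 * (1 - cos y) - (1 - cos (real n * y)))" for y
    using one_minus_cos_nat_mult_le[of n y] by simp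
  then have "F 0 \<le> F x"
    using DERIV_nonneg_imp_nondecreasing[OF assms] F_deriv by blast
  then show ?thesis
    by (simp add: F_def)
qed

theorem lemma3p3:
  fixes R :: real and l :: nat
  assumes "R > 0" and "l \<ge> 1"
  shows "W_hat R l \<le> W_hat R 1"
proof -
  have l_cube_pos: "(real l)^3 > 0"
    using assms(2) by simp
  have "W_hat R l = 2 / pi * ((real l * R - sin (real l * R)) / (real l)^3)"
    by (simp add: W_hat_def)
  also have "\<dots> \<le> 2 / pi * (R - sin R)"
    using nat_mult_minus_sin_le[of R l] assms(1) l_cube_pos
    by (intro mult_left_mono) (auto simp: divide_le_eq mult.commute)
  also have "\<dots> = W_hat R 1"
    by (simp add: W_hat_def)
  finally show ?thesis .
qed

end
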